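(* Let $n\ge 6$ and let $H_1$ be the $3$-graph on $[n]$ with edge set $\big(E(B(2,n-2))\setminus\{2ij: i,j\in[n]\setminus\{1,2,3,4,5,6\}\}\big)\cup\{345,346\}$. Then $\lambda(H_1)<\frac{\sqrt3}{18}$.
   Context: $B(2,n-2)$ is the $3$-graph on $[n]$ whose edge set is $\{e\in\binom{[n]}3: e\cap\{1,2\}\neq\emptyset\}$. For a $3$-graph $G$ on $[n]$, $\lambda(G)=\max\{\sum_{e\in E(G)}\prod_{i\in e}x_i:\sum_i x_i=1,x_i\ge0\}$. *)

theory Defs
  imports Complex_Main
begin

text \<open>Its Lagrangian is the maximum (here: supremum, which is attained by compactness)
  of the sum over edges of the product of the weights, over the standard simplex on [n].\<close>

definition lagrangian :: "nat \<Rightarrow> nat set set \<Rightarrow> real" where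
  "lagrangian n G = Sup {(\<Sum>e\<in>G. \<Prod>i\<in>e. x i) | x :: nat \<Rightarrow> real.
      (\<forall>i\<in>{1..n}. 0 \<le> x i) \<and> (\<Sum>i\<in>{1..n}. x i) = 1}"

definition B2 :: "nat \<Rightarrow> nat set set" where
  "B2 n = {e. e \<subseteq> {1..n} \<and> card e = 3 \<and> e \<inter> {1,2} \<noteq> {}}"

definition H1 :: "nat \<Rightarrow> nat set set" where
  "H1 n = (B2 n - {{2,i,j} | i j. i \<in> {1..n} - {1,2,3,4,5,6} \<and> j \<in> {1..n} - {1,2,3,4,5,6} \<and> i \<noteq> j})
           \<union> {{3,4,5},{3,4,6}}"

end

theory Submission
  imports Defs
begin

text \<open>Write a weighting of \<open>H\<^sub>1\<close> as \<open>a = x\<^sub>1\<close>, \<open>b = x\<^sub>2\<close>, \<open>p\<close> the total weight of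
  \<open>{3,4,5,6}\<close> and \<open>q\<close> that of \<open>{7,\<dots>,n}\<close>. Bounding each elementary symmetric sum by its value
  at equal weights, the Lagrangian is at most the maximum of
  \<open>a b (p+q) + a (p+q)\<^sup>2/2 + b (3p\<^sup>2/8 + p q) + p\<^sup>3/27\<close> on the simplex. That maximum is below
  \<open>0.0962 < \<surd>3/18 \<approx> 0.09623\<close>: with \<open>S = p + q\<close> a crude bound handles \<open>S \<notin> [0.47, 0.77]\<close>;
  otherwise one maximises in \<open>b\<close> and controls the remaining cubics in \<open>S\<close> and \<open>t = p/S\<close> by
  Bernstein certificates.\<close>

definition pairs :: "'a set \<Rightarrow> 'a set set" where
  "pairs V = {T. T \<subseteq> V \<and> card T = 2}"

definition pair_sum :: "('a \<Rightarrow> real) \<Rightarrow> 'a set \<Rightarrow> real" where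
  "pair_sum x V = (\<Sum>T\<in>pairs V. \<Prod>i\<in>T. x i)"

lemma finite_pairs: "finite V \<Longrightarrow> finite (pairs V)"
  unfolding pairs_def by (rule finite_subset[of _ "Pow V"]) auto

lemma pairs_insert:
  assumes "v \<notin> V"
  shows "pairs (insert v V) = pairs V \<union> (\<lambda>u. {v, u}) ` V"
proof
  show "pairs (insert v V) \<subseteq> pairs V \<union> (\<lambda>u. {v, u}) ` V"
  proof
    fix T assume "T \<in> pairs (insert v V)"
    then have T: "T \<subseteq> insert v V" "card T = 2" by (auto simp: pairs_def)
    then obtain y z where "T = {y, z}" "y \<noteq> z" by (auto simp: card_2_iff)
    with T assms show "T \<in> pairs V \<union> (\<lambda>u. {v, u}) ` V"
      by (cases "v \<in> T") (auto simp: pairs_def insert_commute)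
  qed
  show "pairs V \<union> (\<lambda>u. {v, u}) ` V \<subseteq> pairs (insert v V)"
    using assms by (auto simp: pairs_def card_insert_if)
qed

lemma pair_sum_empty [simp]: "pair_sum x {} = 0"
  by (simp add: pair_sum_def pairs_def)

lemma pair_sum_insert:
  assumes "finite V" "v \<notin> V"
  shows "pair_sum x (insert v V) = pair_sum x V + x v * sum x V"
proof -
  have disj: "pairs V \<inter> (\<lambda>u. {v, u}) ` V = {}"
    using assms(2) by (auto simp: pairs_def)
  have inj: "inj_on (\<lambda>u. {v, u}) V"
    using assms(2) by (auto simp: inj_on_def doubleton_eq_iff)
  have "pair_sum x (insert v V) = pair_sum x V + (\<Sum>T\<in>(\<lambda>u. {v, u}) ` V. \<Prod>i\<in>T. x i)"
    unfolding pair_sum_def pairs_insert[OF assms(2)]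
    by (rule sum.union_disjoint) (use assms disj finite_pairs in auto)
  also have "(\<Sum>T\<in>(\<lambda>u. {v, u}) ` V. \<Prod>i\<in>T. x i) = (\<Sum>u\<in>V. x v * x u)"
  proof (simp only: sum.reindex[OF inj] comp_def, intro sum.cong refl)
    fix u assume "u \<in> V"
    with assms(2) have "u \<noteq> v" by auto
    then show "(\<Prod>i\<in>{v, u}. x i) = x v * x u" by simp
  qed
  finally show ?thesis by (simp add: sum_distrib_left)
qed

lemma pair_sum_square:
  assumes "finite V"
  shows "2 * pair_sum x V = (sum x V)\<^sup>2 - (\<Sum>i\<in>V. (x i)\<^sup>2)"
  using assms
  by (induction V rule: finite_induct)
     (simp_all add: pair_sum_insert power2_eq_square algebra_simps)

lemma pair_sum_le: "finite V \<Longrightarrow> 2 * pair_sum x V \<le> (sum x V)\<^sup>2"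
  using pair_sum_square[of V x] sum_nonneg[of V "\<lambda>i. (x i)\<^sup>2"] by simp

lemma pair_sum_union:
  assumes "finite A" "finite R" "A \<inter> R = {}"
  shows "pair_sum x (A \<union> R) = pair_sum x A + pair_sum x R + sum x A * sum x R"
proof -
  have "2 * pair_sum x (A \<union> R)
      = (sum x A + sum x R)\<^sup>2 - ((\<Sum>i\<in>A. (x i)\<^sup>2) + (\<Sum>i\<in>R. (x i)\<^sup>2))"
    using assms by (simp add: pair_sum_square sum.union_disjoint)
  then show ?thesis
    using pair_sum_square[OF assms(1), of x] pair_sum_square[OF assms(2), of x]
    by (simp add: power2_eq_square algebra_simps)
qed

lemma pair_sum_meeting:
  assumes "finite A" "finite R" "A \<inter> R = {}"
  shows "(\<Sum>T\<in>{T\<in>pairs (A \<union> R). T \<inter> A \<noteq> {}}. \<Prod>i\<in>T. x i)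
           = pair_sum x A + sum x A * sum x R"
proof -
  have "{T\<in>pairs (A \<union> R). T \<inter> A \<noteq> {}} = pairs (A \<union> R) - pairs R"
    using assms(3) by (auto simp: pairs_def)
  moreover have "pairs R \<subseteq> pairs (A \<union> R)" by (auto simp: pairs_def)
  ultimately have "(\<Sum>T\<in>{T\<in>pairs (A \<union> R). T \<inter> A \<noteq> {}}. \<Prod>i\<in>T. x i)
      = pair_sum x (A \<union> R) - pair_sum x R"
    unfolding pair_sum_def using assms by (simp add: sum_diff finite_pairs)
  then show ?thesis using pair_sum_union[OF assms] by simp
qed

lemma sum_prod_insert_image:
  fixes x :: "'a \<Rightarrow> real"
  assumes "\<forall>T\<in>F. finite T \<and> v \<notin> T"
  shows "(\<Sum>T\<in>insert v ` F. \<Prod>i\<in>T. x i) = x v * (\<Sum>T\<in>F. \<Prod>i\<in>T. x i)"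
proof -
  have "inj_on (insert v) F"
    using assms by (intro inj_onI) (metis insert_ident)
  then have "(\<Sum>T\<in>insert v ` F. \<Prod>i\<in>T. x i) = (\<Sum>T\<in>F. \<Prod>i\<in>insert v T. x i)"
    by (simp add: sum.reindex)
  also have "\<dots> = (\<Sum>T\<in>F. x v * (\<Prod>i\<in>T. x i))"
    using assms by (intro sum.cong) auto
  finally show ?thesis by (simp add: sum_distrib_left)
qed

lemma arith_geo_mean_3:
  fixes u v w :: real
  assumes "0 \<le> u" "0 \<le> v" "0 \<le> w"
  shows "u * v * w \<le> (u + v + w)^3 / 27"
proof -
  define s where "s = u + v"
  have "u * v \<le> s\<^sup>2 / 4"
    using zero_le_power2[of "u - v"] by (simp add: s_def power2_eq_square algebra_simps)
  then have "u * v * w \<le> s\<^sup>2 / 4 * w" using assms by (intro mult_right_mono) auto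
  moreover have "4 * (s + w)^3 - 27 * (s\<^sup>2 * w) = (s - 2 * w)\<^sup>2 * (4 * s + w)"
    by (simp add: power2_eq_square power3_eq_cube algebra_simps)
  moreover have "0 \<le> (s - 2 * w)\<^sup>2 * (4 * s + w)" using assms by (simp add: s_def)
  ultimately show ?thesis by (simp add: s_def)
qed

lemma bernstein_cubic_nonneg:
  fixes x lo hi c0 c1 c2 c3 :: real
  assumes "lo \<le> x" "x \<le> hi" "0 \<le> c0" "0 \<le> c1" "0 \<le> c2" "0 \<le> c3"
  shows "0 \<le> c0*(hi-x)^3 + c1*(x-lo)*(hi-x)^2 + c2*(x-lo)^2*(hi-x) + c3*(x-lo)^3"
  using assms by (intro add_nonneg_nonneg mult_nonneg_nonneg) auto

definition reduced_lagrangian :: "real \<Rightarrow> real \<Rightarrow> real \<Rightarrow> real \<Rightarrow> real" where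
  "reduced_lagrangian a b p q = a*b*(p+q) + a*(p+q)^2/2 + b*(3*p^2/8 + p*q) + p^3/27"

lemma reduced_lagrangian_le_crude:
  fixes a b p q :: real
  assumes "0 \<le> a" "0 \<le> b" "0 \<le> p" "0 \<le> q" "a + b + p + q = 1"
  shows "reduced_lagrangian a b p q \<le> ((p+q) - (p+q)^3)/4 + (p+q)^3/27"
proof -
  define S where "S = p + q"
  have a: "a = 1 - S - b" using assms(5) by (simp add: S_def)
  have "3*p^2/8 + p*q \<le> S^2/2"
    using assms(3,4) by (simp add: S_def power2_eq_square algebra_simps)
  then have 1: "b*(3*p^2/8 + p*q) \<le> b*(S^2/2)" using assms(2) by (rule mult_left_mono)
  have 2: "p^3 \<le> S^3" using assms(3,4) by (intro power_mono) (auto simp: S_def)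
  have "a*b \<le> (1-S)^2/4"
    using zero_le_power2[of "a - b"] unfolding a by (simp add: power2_eq_square algebra_simps)
  then have 3: "a*b*S \<le> (1-S)^2/4*S" using assms(3,4) by (intro mult_right_mono) (auto simp: S_def)
  have "reduced_lagrangian a b p q \<le> (1-S)^2/4*S + a*S^2/2 + b*(S^2/2) + S^3/27"
    using 1 2 3 by (simp add: reduced_lagrangian_def S_def)
  also have "\<dots> = (S - S^3)/4 + S^3/27"
    unfolding a by (simp add: field_simps power2_eq_square power3_eq_cube)
  finally show ?thesis by (simp add: S_def)
qed

lemma crude_bound_le:
  fixes S :: real
  assumes "0 \<le> S" "S \<le> 1" "S \<le> 47/100 \<or> 77/100 \<le> S"
  shows "(S - S^3)/4 + S^3/27 \<le> 481/5000"
  using assms(3)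
proof
  assume "S \<le> 47/100"
  have "481/5000 - ((S - S^3)/4 + S^3/27) = (96200/103823)*(47/100-S)^3
      + (171100/103823)*(S-0)*(47/100-S)^2 + (53600/103823)*(S-0)^2*(47/100-S)
      + (87529/11212884)*(S-0)^3"
    by (simp add: field_simps power2_eq_square power3_eq_cube)
  then show ?thesis
    using bernstein_cubic_nonneg[OF assms(1) \<open>S \<le> 47/100\<close>,
        of "96200/103823" "171100/103823" "53600/103823" "87529/11212884"] by linarith
next
  assume "77/100 \<le> S"
  have "481/5000 - ((S - S^3)/4 + S^3/27) = (99859/1314036)*(1-S)^3
      + (291575/109503)*(S-77/100)*(1-S)^2 + (792400/109503)*(S-77/100)^2*(1-S)
      + (1597400/328509)*(S-77/100)^3"
    by (simp add: field_simps power2_eq_square power3_eq_cube)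
  then show ?thesis
    using bernstein_cubic_nonneg[OF \<open>77/100 \<le> S\<close> assms(2),
        of "99859/1314036" "291575/109503" "792400/109503" "1597400/328509"] by linarith
qed

text \<open>The maximum over \<open>b\<close> of \<open>reduced_lagrangian (1 - S - b) b (t S) ((1 - t) S)\<close>, attained
  at \<open>b = (1 - S (3/2 - t + 5/8 t\<^sup>2)) / 2\<close>.\<close>

definition reduced_max :: "real \<Rightarrow> real \<Rightarrow> real" where
  "reduced_max S t = (1-S)*S^2/2 + S*(1 - S*(3/2 - t + 5/8*t^2))^2/4 + t^3*S^3/27"

definition reduced_max_slope :: "real \<Rightarrow> real \<Rightarrow> real" where
  "reduced_max_slope S t = (3-5*t)*(1/16 - S*(21/8 - t + 5/8*t^2)/32) + S*(1+t+t^2)/27"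

lemma reduced_lagrangian_le_reduced_max:
  fixes b S t :: real
  assumes "0 \<le> S"
  shows "reduced_lagrangian (1 - S - b) b (t*S) ((1-t)*S) \<le> reduced_max S t"
proof -
  have "reduced_max S t - reduced_lagrangian (1 - S - b) b (t*S) ((1-t)*S)
      = S*(b - (1 - S*(3/2 - t + 5/8*t^2))/2)^2"
    unfolding reduced_max_def reduced_lagrangian_def
    by (simp add: field_simps power2_eq_square power3_eq_cube)
  then show ?thesis using assms by (metis diff_ge_0_iff_ge zero_le_mult_iff zero_le_power2)
qed

lemma reduced_max_eq_slope:
  "reduced_max S t = reduced_max S 1 - S^2 * (1-t) * reduced_max_slope S t"
  unfolding reduced_max_def reduced_max_slope_def
  by (simp add: field_simps power2_eq_square power3_eq_cube)

lemma reduced_max_slope_affine: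
  "(S2 - S1) * reduced_max_slope S t
     = (S2 - S) * reduced_max_slope S1 t + (S - S1) * reduced_max_slope S2 t"
  unfolding reduced_max_slope_def by (simp add: field_simps power2_eq_square)

lemma reduced_max_slope_nonneg:
  assumes "51/100 \<le> S" "S \<le> 77/100" "0 \<le> t" "t \<le> 1"
  shows "0 \<le> reduced_max_slope S t"
proof -
  have "reduced_max_slope (51/100) t = (3727/46080)*(1-t)^3 + (11867/57600)*(t-0)*(1-t)^2
      + (3023/38400)*(t-0)^2*(1-t) + (13/3840)*(t-0)^3"
    unfolding reduced_max_slope_def by (simp add: field_simps power2_eq_square power3_eq_cube)
  then have lo: "0 \<le> reduced_max_slope (51/100) t"
    using bernstein_cubic_nonneg[OF assms(3,4), of "3727/46080" "11867/57600" "3023/38400" "13/3840"]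
    by simp
  have "reduced_max_slope (77/100) t = (3667/138240)*(1-t)^3 + (31727/172800)*(t-0)*(1-t)^2
      + (17363/115200)*(t-0)^2*(1-t) + (793/11520)*(t-0)^3"
    unfolding reduced_max_slope_def by (simp add: field_simps power2_eq_square power3_eq_cube)
  then have hi: "0 \<le> reduced_max_slope (77/100) t"
    using bernstein_cubic_nonneg[OF assms(3,4), of "3667/138240" "31727/172800" "17363/115200" "793/11520"]
    by simp
  have "0 \<le> (77/100 - S) * reduced_max_slope (51/100) t + (S - 51/100) * reduced_max_slope (77/100) t"
    using assms(1,2) lo hi by (intro add_nonneg_nonneg mult_nonneg_nonneg) auto
  then show ?thesis using reduced_max_slope_affine[of "77/100" "51/100" S t] by simp
qed

lemma reduced_max_slope_lower:
  assumes "47/100 \<le> S" "S \<le> 51/100" "0 \<le> t" "t \<le> 1"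
  shows "- 7/1000 \<le> reduced_max_slope S t"
proof -
  have "reduced_max_slope (47/100) t + 7/1000 = (332617/3456000)*(1-t)^3
      + (199129/864000)*(t-0)*(1-t)^2 + (51061/576000)*(t-0)^2*(1-t) + (91/288000)*(t-0)^3"
    unfolding reduced_max_slope_def by (simp add: field_simps power2_eq_square power3_eq_cube)
  then have lo: "0 \<le> reduced_max_slope (47/100) t + 7/1000"
    using bernstein_cubic_nonneg[OF assms(3,4),
        of "332617/3456000" "199129/864000" "51061/576000" "91/288000"]
    by simp
  have hi: "0 \<le> reduced_max_slope (51/100) t"
    using reduced_max_slope_nonneg[of "51/100" t] assms(3,4) by simp
  have "0 \<le> (51/100 - S) * (reduced_max_slope (47/100) t + 7/1000)"
    using assms(2) lo by simp
  moreover have "0 \<le> (S - 47/100) * (reduced_max_slope (51/100) t + 7/1000)"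
    using assms(1) hi by simp
  ultimately show ?thesis
    using reduced_max_slope_affine[of "51/100" "47/100" S t] by (simp add: algebra_simps)
qed

lemma reduced_max_one_le:
  fixes S :: real
  assumes "0 \<le> S"
  shows "reduced_max S 1 \<le> 481/5000"
proof -
  have "481/5000 - reduced_max S 1 = (S - 1563/2500)^2 * ((1013/6912)*S + 707773/2880000)
      + (9733/1600000000)*S + 281389107/2000000000000"
    unfolding reduced_max_def by (simp add: field_simps power2_eq_square power3_eq_cube)
  moreover have "0 \<le> (S - 1563/2500)^2 * ((1013/6912)*S + 707773/2880000)"
    using assms by (intro mult_nonneg_nonneg) auto
  ultimately show ?thesis using assms by linarith
qed

lemma reduced_max_le:
  assumes "47/100 \<le> S" "S \<le> 77/100" "0 \<le> t" "t \<le> 1"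
  shows "reduced_max S t \<le> 481/5000"
proof (cases "51/100 \<le> S")
  case True
  then have "0 \<le> S^2 * (1-t) * reduced_max_slope S t"
    using reduced_max_slope_nonneg[OF True assms(2-4)] assms(4) by simp
  then show ?thesis
    using reduced_max_eq_slope[of S t] reduced_max_one_le[of S] assms(1) by linarith
next
  case False
  have "S^2 * (1-t) * (- 7/1000) \<le> S^2 * (1-t) * reduced_max_slope S t"
    using reduced_max_slope_lower[OF assms(1) _ assms(3,4)] False assms(4)
    by (intro mult_left_mono) auto
  moreover have "S^2 * (1-t) * (7/1000) \<le> S^2 * (7/1000)"
    using assms(3) by (simp add: algebra_simps)
  moreover have "481/5000 - (reduced_max S 1 + 7/1000*S^2) = (213439367/2211840)*(51/100-S)^3
      + (55677881/245760)*(S-47/100)*(51/100-S)^2 + (2787995/16384)*(S-47/100)^2*(51/100-S)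
      + (3297849/81920)*(S-47/100)^3"
    unfolding reduced_max_def by (simp add: field_simps power2_eq_square power3_eq_cube)
  moreover have "0 \<le> (213439367/2211840)*(51/100-S)^3
      + (55677881/245760)*(S-47/100)*(51/100-S)^2 + (2787995/16384)*(S-47/100)^2*(51/100-S)
      + (3297849/81920)*(S-47/100)^3"
    using False assms(1) by (intro bernstein_cubic_nonneg) auto
  ultimately show ?thesis using reduced_max_eq_slope[of S t] by linarith
qed

lemma reduced_lagrangian_le:
  fixes a b p q :: real
  assumes "0 \<le> a" "0 \<le> b" "0 \<le> p" "0 \<le> q" "a + b + p + q = 1"
  shows "reduced_lagrangian a b p q \<le> 481/5000"
proof (cases "p + q \<le> 47/100 \<or> 77/100 \<le> p + q")
  case True
  then show ?thesis
    using reduced_lagrangian_le_crude[OF assms] crude_bound_le[of "p+q"] assms by linarith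
next
  case False
  define S where "S = p + q"
  define t where "t = p / S"
  have S: "47/100 \<le> S" "S \<le> 77/100" using False by (auto simp: S_def)
  then have "p = t * S" "q = (1-t) * S" "a = 1 - S - b" "0 \<le> t" "t \<le> 1"
    using assms by (auto simp: t_def S_def field_simps)
  then have "reduced_lagrangian a b p q \<le> reduced_max S t"
    using reduced_lagrangian_le_reduced_max[of S b t] S by simp
  also have "\<dots> \<le> 481/5000" using reduced_max_le S \<open>0 \<le> t\<close> \<open>t \<le> 1\<close> by blast
  finally show ?thesis .
qed

lemma H1_subset:
  "H1 n \<subseteq> insert 1 ` pairs {2..n} \<union> insert 2 ` {T\<in>pairs {3..n}. T \<inter> {3,4,5,6} \<noteq> {}}
     \<union> {{3,4,5},{3,4,6}}"
proof
  fix e assume "e \<in> H1 n"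
  then consider "e \<in> {{3,4,5},{3,4,6}}"
    | "e \<subseteq> {1..n}" "card e = 3" "e \<inter> {1,2} \<noteq> {}"
        "e \<notin> {{2,i,j} | i j. i \<in> {1..n} - {1,2,3,4,5,6} \<and> j \<in> {1..n} - {1,2,3,4,5,6} \<and> i \<noteq> j}"
    unfolding H1_def B2_def by blast
  then show "e \<in> insert 1 ` pairs {2..n} \<union> insert 2 ` {T\<in>pairs {3..n}. T \<inter> {3,4,5,6} \<noteq> {}}
     \<union> {{3,4,5},{3,4,6}}"
  proof cases
    case 2
    show ?thesis
    proof (cases "1 \<in> e")
      case True
      have "e - {1} \<subseteq> {2..n}" using 2(1) by auto
      moreover have "card (e - {1}) = 2" using True 2(2) by simp
      ultimately have "e - {1} \<in> pairs {2..n}" by (simp add: pairs_def)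
      moreover have "e = insert 1 (e - {1})" using True by auto
      ultimately show ?thesis by blast
    next
      case False
      then have "2 \<in> e" using 2(3) by blast
      have "e - {2} \<subseteq> {3..n}"
      proof
        fix y assume "y \<in> e - {2}"
        then have "y \<in> {1..n}" "y \<noteq> 1" "y \<noteq> 2" using 2(1) False by auto
        then show "y \<in> {3..n}" by auto
      qed
      moreover have "card (e - {2}) = 2" using \<open>2 \<in> e\<close> 2(2) by simp
      ultimately have T: "e - {2} \<in> pairs {3..n}" by (simp add: pairs_def)
      have e: "e = insert 2 (e - {2})" using \<open>2 \<in> e\<close> by auto
      obtain i j where ij: "e - {2} = {i, j}" "i \<noteq> j"
        using \<open>card (e - {2}) = 2\<close> by (auto simp: card_2_iff)
      have "(e - {2}) \<inter> {3,4,5,6} \<noteq> {}"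
      proof
        assume "(e - {2}) \<inter> {3,4,5,6} = {}"
        then have "i \<in> {1..n} - {1,2,3,4,5,6}" "j \<in> {1..n} - {1,2,3,4,5,6}"
          using ij(1) \<open>e - {2} \<subseteq> {3..n}\<close> by auto
        moreover have "e = {2, i, j}" using e ij(1) by simp
        ultimately show False using 2(4) ij(2) by blast
      qed
      then show ?thesis using T e by blast
    qed
  qed blast
qed

lemma H1_weight_le_pair_sums:
  fixes x :: "nat \<Rightarrow> real"
  assumes "6 \<le> n" "\<forall>i\<in>{1..n}. 0 \<le> x i"
  shows "(\<Sum>e\<in>H1 n. \<Prod>i\<in>e. x i) \<le> x 1 * pair_sum x {2..n}
     + x 2 * (pair_sum x {3,4,5,6} + sum x {3,4,5,6} * sum x {7..n}) + x 3 * x 4 * (x 5 + x 6)"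
proof -
  define w where "w e = (\<Prod>i\<in>e. x i)" for e :: "nat set"
  define E1 where "E1 = insert 1 ` pairs {2..n}"
  define E2 where "E2 = insert (2::nat) ` {T\<in>pairs {3..n}. T \<inter> {3,4,5,6} \<noteq> {}}"
  define E3 where "E3 = {{3::nat,4,5},{3,4,6}}"
  have fin: "finite E1" "finite E2" "finite E3"
    by (simp_all add: E1_def E2_def E3_def finite_pairs)
  have "\<forall>e\<in>E1 \<union> E2 \<union> E3. e \<subseteq> {1..n}"
    using assms(1) by (auto simp: E1_def E2_def E3_def pairs_def)
  then have "\<forall>e\<in>E1 \<union> E2 \<union> E3. 0 \<le> w e"
    using assms(2) unfolding w_def by (blast intro: prod_nonneg)
  moreover have "H1 n \<subseteq> E1 \<union> E2 \<union> E3"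
    using H1_subset[of n] by (simp add: E1_def E2_def E3_def)
  ultimately have "sum w (H1 n) \<le> sum w (E1 \<union> E2 \<union> E3)"
    using fin by (intro sum_mono2) auto
  also have "\<dots> = sum w E1 + sum w E2 + sum w E3"
  proof -
    have "\<forall>e\<in>E1. 1 \<in> e" "\<forall>e\<in>E2. 1 \<notin> e \<and> 2 \<in> e" "\<forall>e\<in>E3. 1 \<notin> e \<and> 2 \<notin> e"
      by (auto simp: E1_def E2_def E3_def pairs_def)
    then have "E1 \<inter> E2 = {}" "(E1 \<union> E2) \<inter> E3 = {}" by blast+
    then show ?thesis using fin by (simp add: sum.union_disjoint)
  qed
  also have "sum w E1 = x 1 * pair_sum x {2..n}"
    unfolding E1_def w_def pair_sum_def
    by (rule sum_prod_insert_image) (auto simp: pairs_def intro: card_ge_0_finite)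
  also have "sum w E2 = x 2 * (\<Sum>T\<in>{T\<in>pairs {3..n}. T \<inter> {3,4,5,6} \<noteq> {}}. w T)"
    unfolding E2_def w_def
    by (rule sum_prod_insert_image) (auto simp: pairs_def intro: card_ge_0_finite)
  also have "{3..n} = {3,4,5,6} \<union> {7..n}" using assms(1) by auto
  also have "(\<Sum>T\<in>{T\<in>pairs ({3,4,5,6} \<union> {7..n}). T \<inter> {3,4,5,6} \<noteq> {}}. w T)
      = pair_sum x {3,4,5,6} + sum x {3,4,5,6} * sum x {7..n}"
    unfolding w_def by (rule pair_sum_meeting) auto
  also have "sum w E3 = x 3 * x 4 * (x 5 + x 6)"
  proof -
    have "{3::nat,4,5} \<noteq> {3,4,6}"
    proof
      assume "{3::nat,4,5} = {3,4,6}"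
      then have "(5::nat) \<in> {3,4,6}" by blast
      then show False by simp
    qed
    then show ?thesis by (simp add: E3_def w_def algebra_simps)
  qed
  finally show ?thesis by (simp add: w_def)
qed

lemma H1_weight_le:
  fixes x :: "nat \<Rightarrow> real"
  assumes "6 \<le> n" "\<forall>i\<in>{1..n}. 0 \<le> x i" "(\<Sum>i\<in>{1..n}. x i) = 1"
  shows "(\<Sum>e\<in>H1 n. \<Prod>i\<in>e. x i) \<le> 481/5000"
proof -
  define A where "A = {3::nat,4,5,6}"
  define p where "p = sum x A"
  define q where "q = sum x {7..n}"
  have x: "0 \<le> x 1" "0 \<le> x 2" "0 \<le> x 3" "0 \<le> x 4" "0 \<le> x 5" "0 \<le> x 6"
    using assms(1,2) by auto
  have pq: "0 \<le> p" "0 \<le> q"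
    using x assms(2) by (auto simp: p_def A_def q_def intro!: sum_nonneg)
  have "{3..n} = A \<union> {7..n}" "A \<inter> {7..n} = {}" using assms(1) by (auto simp: A_def)
  then have sum_rest: "sum x {3..n} = p + q"
    by (simp add: p_def q_def sum.union_disjoint A_def)
  have "{1..n} = insert 1 (insert 2 {3..n})" "{2..n} = insert 2 {3..n}" using assms(1) by auto
  then have total: "x 1 + x 2 + p + q = 1" and
    pairs_2n: "pair_sum x {2..n} = pair_sum x {3..n} + x 2 * (p + q)"
    using assms(3) sum_rest by (simp_all add: pair_sum_insert)
  have "x 1 * pair_sum x {3..n} \<le> x 1 * ((p + q)^2/2)"
    using pair_sum_le[of "{3..n}" x] sum_rest x(1) by (intro mult_left_mono) auto
  moreover have "x 2 * pair_sum x A \<le> x 2 * (3*p^2/8)"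
  proof (intro mult_left_mono)
    have "3*p^2/8 - pair_sum x A = ((x 3 - x 4)^2 + (x 3 - x 5)^2 + (x 3 - x 6)^2
        + (x 4 - x 5)^2 + (x 4 - x 6)^2 + (x 5 - x 6)^2)/8"
      by (simp add: p_def A_def pair_sum_insert power2_eq_square field_simps)
    moreover have "0 \<le> ((x 3 - x 4)^2 + (x 3 - x 5)^2 + (x 3 - x 6)^2
        + (x 4 - x 5)^2 + (x 4 - x 6)^2 + (x 5 - x 6)^2)/8" by simp
    ultimately show "pair_sum x A \<le> 3*p^2/8" by linarith
  qed (use x in auto)
  moreover have "x 3 * x 4 * (x 5 + x 6) \<le> p^3/27"
    using arith_geo_mean_3[of "x 3" "x 4" "x 5 + x 6"] x by (simp add: p_def A_def add.assoc)
  ultimately have "(\<Sum>e\<in>H1 n. \<Prod>i\<in>e. x i) \<le> reduced_lagrangian (x 1) (x 2) p q"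
    using H1_weight_le_pair_sums[OF assms(1,2)] pairs_2n
    unfolding reduced_lagrangian_def A_def p_def q_def
    by (simp add: algebra_simps)
  also have "\<dots> \<le> 481/5000" using reduced_lagrangian_le x(1,2) pq total by blast
  finally show ?thesis .
qed

theorem lemma4p10:
  fixes n :: nat
  assumes "n \<ge> 6"
  shows "lagrangian n (H1 n) < sqrt 3 / 18"
proof -
  let ?X = "{(\<Sum>e\<in>H1 n. \<Prod>i\<in>e. x i) | x :: nat \<Rightarrow> real.
      (\<forall>i\<in>{1..n}. 0 \<le> x i) \<and> (\<Sum>i\<in>{1..n}. x i) = 1}"
  define x0 :: "nat \<Rightarrow> real" where "x0 i = (if i = 1 then 1 else 0)" for i
  have "(\<forall>i\<in>{1..n}. 0 \<le> x0 i) \<and> (\<Sum>i\<in>{1..n}. x0 i) = 1"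
    using assms by (simp add: x0_def)
  then have "?X \<noteq> {}" by blast
  then have "lagrangian n (H1 n) \<le> 481/5000"
    unfolding lagrangian_def using H1_weight_le[OF assms] by (intro cSup_least) auto
  also have "(481/5000::real) < sqrt 3 / 18"
    using real_less_rsqrt[of "481*18/5000" 3] by (simp add: power2_eq_square)
  finally show ?thesis .
qed

end
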